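(* For every $n$-dimensional (compact) polyhedron $P$ there is a natural number $m$ such that the cone over $P$ can be embedded in the product of $n+1$ copies of an $m$-od.
   Context: A polyhedron is the underlying space of a finite regular CW complex (equivalently, a finite simplicial complex). An $m$-od is the cone over an $m$-element set. *)

theory Defs
  imports "HOL-Analysis.Analysis"
begin

text \<open>Cone over a set P (in a real vector space): realised in P \<times> [0,1] with
  apex (0,0); for compact P this is homeomorphic to P \<times> [0,1] / P \<times> {0}.\<close>
definition cone_over :: "'a::real_vector set \<Rightarrow> ('a \<times> real) set" where
  "cone_over P = {(t *\<^sub>R x, t) | x t. x \<in> P \<and> 0 \<le> t \<and> t \<le> 1}"

text \<open>The m-od: the cone over an m-element set (here the set {0,...,m-1} of reals).\<close>
definition m_od :: "nat \<Rightarrow> (real \<times> real) set" where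
  "m_od m = cone_over {real k | k. k < m}"

definition power_space :: "nat \<Rightarrow> ('b::zero) set \<Rightarrow> (nat \<Rightarrow> 'b) set" where
  "power_space n X = {g. (\<forall>i\<le>n. g i \<in> X) \<and> (\<forall>i>n. g i = 0)}"

definition polyhedron_of_dim :: "nat \<Rightarrow> 'a::euclidean_space set \<Rightarrow> bool" where
  "polyhedron_of_dim n P \<longleftrightarrow>
     (\<exists>K. simplicial_complex K \<and> \<Union>K = P \<and>
          (\<exists>S\<in>K. int n simplex S) \<and>
          (\<forall>S\<in>K. \<forall>k. k simplex S \<longrightarrow> k \<le> int n))"

end

theory Submission
  imports Defs
begin

(* Let K triangulate P with vertex set V, every simplex having at most n + 1 vertices.
   A point of the cone over P is described by parameters (u, t): t \<in> [0,1] and barycentric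
   coordinates u :: 'a \<Rightarrow> real supported on the vertices of one simplex.  The map
   (u, t) \<mapsto> (t \<cdot> \<Sigma>v u(v) v, t) parametrises the cone, and two parameters give the same
   point iff t = t' and (t = 0 or u = u').

   The layer-cake decomposition writes u = \<Sigma>F \<lambda>F(u) \<cdot> 1_F over the superlevel sets F of u,
   with weights \<lambda>F(u) = max 0 (min_F u - max_(V-F) u\<^sup>+).  These weights are continuous in u,
   at most one set of each cardinality has positive weight, and only sets with at most
   n + 1 elements occur.  Numbering the subsets of V by c :: 'a set \<Rightarrow> nat, the j-th
   coordinate \<Sigma>(|F| = j+1) t \<lambda>F(u) \<cdot> (c F, 1) lies on the (c F)-th edge of an m-od.  This
   second map has the same fibres as the first one on a compact parameter space, so the
   two images are homeomorphic. *)


text \<open>Two continuous maps on a compact space with the same fibres have homeomorphic images: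
  the first is a quotient map onto its image, and the second factors through it by a
  continuous injection.\<close>
lemma homeomorphic_images_same_fibres:
  fixes f :: "'z::topological_space \<Rightarrow> 'b::metric_space" and g :: "'z \<Rightarrow> 'c::t2_space"
  assumes Z: "compact Z" and cf: "continuous_on Z f" and cg: "continuous_on Z g"
    and fib: "\<And>z z'. z \<in> Z \<Longrightarrow> z' \<in> Z \<Longrightarrow> f z = f z' \<longleftrightarrow> g z = g z'"
  shows "f ` Z homeomorphic g ` Z"
proof -
  have "continuous_map (top_of_set Z) (top_of_set (f ` Z)) f"
    unfolding continuous_map_in_subtopology using cf by auto
  moreover have "compact_space (top_of_set Z)" using Z by (simp add: compact_space_subtopology)
  moreover have "Hausdorff_space (top_of_set (f ` Z))" by (simp add: Hausdorff_space_subtopology)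
  ultimately have quotient: "quotient_map (top_of_set Z) (top_of_set (f ` Z)) f"
    by (intro T1_Spaces.continuous_imp_quotient_map) auto
  have "continuous_map (top_of_set Z) euclidean g" using cg by simp
  moreover have "\<And>z z'. z \<in> topspace (top_of_set Z) \<Longrightarrow> z' \<in> topspace (top_of_set Z)
      \<Longrightarrow> f z = f z' \<Longrightarrow> g z = g z'"
    using fib by simp
  ultimately obtain h where h: "continuous_map (top_of_set (f ` Z)) euclidean h"
      "h ` topspace (top_of_set (f ` Z)) = g ` topspace (top_of_set Z)"
      "\<And>z. z \<in> topspace (top_of_set Z) \<Longrightarrow> h (f z) = g z"
    using quotient_map_lift_exists[OF quotient] by blast
  have "inj_on h (f ` Z)"
  proof (rule inj_onI)
    fix a b assume "a \<in> f ` Z" "b \<in> f ` Z" "h a = h b"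
    then obtain z z' where "z \<in> Z" "z' \<in> Z" "a = f z" "b = f z'" "g z = g z'"
      using h(3) by auto
    then show "a = b" using fib by blast
  qed
  then have "f ` Z homeomorphic h ` f ` Z"
    using h(1) by (intro homeomorphic_compact compact_continuous_image[OF cf Z]) auto
  then show ?thesis using h(2) by simp
qed

lemma compact_unit_cube: "compact {u::'i \<Rightarrow> real. \<forall>i. u i \<in> {0..1}}"
proof -
  have "compactin (product_topology (\<lambda>i. euclidean) UNIV) (PiE UNIV (\<lambda>i::'i. {0..1::real}))"
    by (simp add: compactin_PiE)
  then show ?thesis
    by (simp add: euclidean_product_topology PiE_UNIV_domain Pi_def)
qed

lemma continuous_on_coordinate: "continuous_on S (\<lambda>u::'i \<Rightarrow> real. u i)"
  by (rule continuous_on_subset[OF continuous_on_product_coordinates]) simp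

lemma continuous_on_Min_family:
  fixes f :: "'i \<Rightarrow> 'a::topological_space \<Rightarrow> real"
  assumes "finite F" "F \<noteq> {}" "\<And>i. i \<in> F \<Longrightarrow> continuous_on S (f i)"
  shows "continuous_on S (\<lambda>x. Min ((\<lambda>i. f i x) ` F))"
  using assms by (induction F rule: finite_ne_induct) (simp_all add: continuous_on_min)

lemma continuous_on_Max_family:
  fixes f :: "'i \<Rightarrow> 'a::topological_space \<Rightarrow> real"
  assumes "finite F" "F \<noteq> {}" "\<And>i. i \<in> F \<Longrightarrow> continuous_on S (f i)"
  shows "continuous_on S (\<lambda>x. Max ((\<lambda>i. f i x) ` F))"
  using assms by (induction F rule: finite_ne_induct) (simp_all add: continuous_on_max)


text \<open>The weight of the layer F of a function u on A above the floor c: the length of the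
  interval of levels s > c whose superlevel set {i \<in> A. u i > s} is exactly F.\<close>
definition layer :: "'i set \<Rightarrow> ('i \<Rightarrow> real) \<Rightarrow> real \<Rightarrow> 'i set \<Rightarrow> real" where
  "layer A u c F = max 0 (Min (u ` F) - Max (insert c (u ` (A - F))))"

lemma layer_nonneg: "0 \<le> layer A u c F"
  unfolding layer_def by simp

lemma layer_remove_min:
  assumes A: "finite A" and w: "w \<in> A" "\<forall>x\<in>A. u w \<le> u x" and c: "c \<le> u w"
    and F: "F \<subseteq> A - {w}"
  shows "layer A u c F = layer (A - {w}) u (u w) F"
proof -
  have eq: "A - F = insert w ((A - {w}) - F)" using F w by auto
  have "Max (insert c (u ` (A - F))) = max c (Max (insert (u w) (u ` ((A - {w}) - F))))"
    unfolding eq using A by simp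
  moreover have "u w \<le> Max (insert (u w) (u ` ((A - {w}) - F)))" using A by simp
  ultimately show ?thesis using c unfolding layer_def by simp
qed

lemma layer_contains_min:
  assumes A: "finite A" and w: "\<forall>x\<in>A. u w \<le> u x" and F: "F \<subseteq> A" "w \<in> F" "F \<noteq> A"
  shows "layer A u c F = 0"
proof -
  obtain y where y: "y \<in> A - F" using F by auto
  have "finite F" using F A finite_subset by blast
  then have "Min (u ` F) \<le> u w" using F by simp
  also have "u w \<le> u y" using w y by auto
  also have "u y \<le> Max (insert c (u ` (A - F)))" using y A by simp
  finally show ?thesis unfolding layer_def by simp
qed

lemma layer_full:
  assumes A: "finite A" and w: "w \<in> A" "\<forall>x\<in>A. u w \<le> u x" and c: "c \<le> u w"
  shows "layer A u c A = u w - c"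
proof -
  have "Min (u ` A) = u w" using w A by (intro Min_eqI) auto
  then show ?thesis unfolding layer_def using c by simp
qed

lemma layer_cake:
  assumes "finite A" "\<forall>j\<in>A. c \<le> u j" "i \<in> A"
  shows "(\<Sum>F\<in>{F. F \<subseteq> A \<and> F \<noteq> {} \<and> i \<in> F}. layer A u c F) = u i - c"
  using assms
proof (induction "card A" arbitrary: A c i rule: less_induct)
  case less
  have A: "finite A" and c: "\<forall>j\<in>A. c \<le> u j" and i: "i \<in> A" by fact+
  have "Min (u ` A) \<in> u ` A" using A i by (intro Min_in) auto
  then obtain w where "w \<in> A" "u w = Min (u ` A)" by (metis imageE)
  then have w: "w \<in> A" "\<forall>x\<in>A. u w \<le> u x" using A by simp_all
  define A' where "A' = A - {w}"
  define S1 where "S1 = {F. F \<subseteq> A' \<and> F \<noteq> {} \<and> i \<in> F}"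
  define S2 where "S2 = {F. F \<subseteq> A \<and> w \<in> F \<and> i \<in> F}"
  have split: "{F. F \<subseteq> A \<and> F \<noteq> {} \<and> i \<in> F} = S1 \<union> S2" "S1 \<inter> S2 = {}"
    unfolding S1_def S2_def A'_def by auto
  have fin: "finite S1" "finite S2"
    unfolding S1_def S2_def A'_def using A by (auto intro: finite_subset[of _ "Pow A"])
  have cw: "c \<le> u w" using c w by auto
  have sum2: "(\<Sum>F\<in>S2. layer A u c F) = u w - c"
  proof -
    have "A \<in> S2" unfolding S2_def using w i by auto
    moreover have "\<forall>F\<in>S2 - {A}. layer A u c F = 0"
      unfolding S2_def using layer_contains_min[OF A w(2)] by auto
    ultimately show ?thesis
      using sum.remove[OF fin(2), of A "layer A u c"] layer_full[OF A w cw] by simp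
  qed
  have sum1: "(\<Sum>F\<in>S1. layer A u c F) = (if i = w then 0 else u i - u w)"
  proof (cases "i = w")
    case True
    then have "S1 = {}" unfolding S1_def A'_def by auto
    then show ?thesis using True by simp
  next
    case False
    have "(\<Sum>F\<in>S1. layer A u c F) = (\<Sum>F\<in>S1. layer A' u (u w) F)"
      unfolding S1_def A'_def using layer_remove_min[OF A w cw] by (intro sum.cong) auto
    also have "\<dots> = u i - u w" unfolding S1_def
    proof (rule less.hyps)
      show "card A' < card A" unfolding A'_def using A w by (metis card_Diff1_less)
    qed (use A w i False in \<open>auto simp: A'_def\<close>)
    finally show ?thesis using False by simp
  qed
  show ?case unfolding split(1) sum.union_disjoint[OF fin split(2)] sum1 sum2 by auto
qed

lemma layer_le:
  assumes "finite A" "finite F" "i \<in> F" "0 \<le> u i"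
  shows "layer A u 0 F \<le> u i"
proof -
  have "Min (u ` F) \<le> u i" "0 \<le> Max (insert 0 (u ` (A - F)))" using assms by simp_all
  then show ?thesis unfolding layer_def using assms(4) by simp
qed

lemma layer_pos_imp_pos:
  assumes "finite A" "finite F" "i \<in> F" "layer A u 0 F > 0"
  shows "u i > 0"
proof -
  have "Min (u ` F) \<le> u i" "0 \<le> Max (insert 0 (u ` (A - F)))" using assms by simp_all
  then show ?thesis using assms(4) unfolding layer_def by linarith
qed

text \<open>Layers of positive weight are superlevel sets, hence form a chain: two of the same
  cardinality coincide.\<close>
lemma layer_unique:
  assumes A: "finite A" and F: "F \<subseteq> A" and G: "G \<subseteq> A" and card: "card F = card G"
    and pos: "layer A u 0 F > 0" "layer A u 0 G > 0"
  shows "F = G"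
proof (rule ccontr)
  assume "F \<noteq> G"
  have fin: "finite F" "finite G" using F G A finite_subset by auto
  have above: "u j < u i" if H: "H \<subseteq> A" "finite H" "layer A u 0 H > 0" "i \<in> H" "j \<in> A - H"
    for H i j
  proof -
    have "Min (u ` H) \<le> u i" "u j \<le> Max (insert 0 (u ` (A - H)))" using H A by auto
    then show ?thesis using H(3) unfolding layer_def by linarith
  qed
  obtain i where i: "i \<in> F" "i \<notin> G"
    using \<open>F \<noteq> G\<close> card fin card_subset_eq by blast
  obtain j where j: "j \<in> G" "j \<notin> F"
    using \<open>F \<noteq> G\<close> card fin card_subset_eq[OF fin(1), of G] by auto
  have "u j < u i" using above[OF F fin(1) pos(1)] i j G by blast
  moreover have "u i < u j" using above[OF G fin(2) pos(2)] i j F by blast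
  ultimately show False by simp
qed

lemma continuous_on_layer:
  assumes "finite A" "finite F" "F \<noteq> {}"
  shows "continuous_on S (\<lambda>u. layer A u 0 F)"
proof (cases "A - F = {}")
  case True
  have "continuous_on S (\<lambda>u. max 0 (Min ((\<lambda>i. u i) ` F) - 0))"
    by (intro continuous_intros continuous_on_Min_family assms continuous_on_coordinate)
  then show ?thesis unfolding layer_def True by simp
next
  case False
  have "continuous_on S (\<lambda>u. max 0 (Min ((\<lambda>i. u i) ` F) - max 0 (Max ((\<lambda>i. u i) ` (A - F)))))"
    by (intro continuous_intros continuous_on_Min_family continuous_on_Max_family
        assms continuous_on_coordinate False) (use assms in simp)
  then show ?thesis unfolding layer_def using False assms by simp
qed


text \<open>Given a numbering c of an index set X, a nonnegative weight h with at most one positive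
  value h F describes the point (h F \<cdot> c F, h F) of the cone over c ` X, i.e. of an m-od.\<close>
definition od_sum :: "('i \<Rightarrow> nat) \<Rightarrow> ('i \<Rightarrow> real) \<Rightarrow> 'i set \<Rightarrow> real \<times> real" where
  "od_sum c h X = (\<Sum>G\<in>X. h G *\<^sub>R (real (c G), 1))"

definition at_most_one_positive :: "('i \<Rightarrow> real) \<Rightarrow> 'i set \<Rightarrow> bool" where
  "at_most_one_positive h X \<longleftrightarrow> (\<forall>F\<in>X. \<forall>G\<in>X. 0 < h F \<longrightarrow> 0 < h G \<longrightarrow> F = G)"

lemma od_sum_cases:
  assumes X: "finite X" and nonneg: "\<forall>G\<in>X. 0 \<le> h G" and one: "at_most_one_positive h X"
  obtains "\<forall>G\<in>X. h G = 0" "od_sum c h X = 0"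
    | F where "F \<in> X" "0 < h F" "\<forall>G\<in>X. G \<noteq> F \<longrightarrow> h G = 0"
        "od_sum c h X = (h F * real (c F), h F)"
proof (cases "\<exists>F\<in>X. 0 < h F")
  case True
  then obtain F where F: "F \<in> X" "0 < h F" by blast
  have others: "\<forall>G\<in>X. G \<noteq> F \<longrightarrow> h G = 0"
  proof (intro ballI impI)
    fix G assume G: "G \<in> X" "G \<noteq> F"
    then have "\<not> 0 < h G" using one F unfolding at_most_one_positive_def by blast
    then show "h G = 0" using nonneg G(1) by (metis order.antisym not_less)
  qed
  have "(\<Sum>G\<in>X - {F}. h G *\<^sub>R (real (c G), 1::real)) = 0"
    using others by (intro sum.neutral) (auto simp: zero_prod_def)
  then have "od_sum c h X = h F *\<^sub>R (real (c F), 1)"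
    unfolding od_sum_def sum.remove[OF X F(1)] by simp
  then show ?thesis using that(2)[OF F others] by simp
next
  case False
  then have zero: "\<forall>G\<in>X. h G = 0" using nonneg by (metis order.antisym not_less)
  then have "od_sum c h X = 0" unfolding od_sum_def by (intro sum.neutral) (simp add: zero_prod_def)
  then show ?thesis using that(1) zero by blast
qed

lemma od_sum_inj:
  assumes X: "finite X" and c: "inj_on c X"
    and h: "\<forall>G\<in>X. 0 \<le> h G" "at_most_one_positive h X"
    and h': "\<forall>G\<in>X. 0 \<le> h' G" "at_most_one_positive h' X"
    and eq: "od_sum c h X = od_sum c h' X"
  shows "\<forall>G\<in>X. h G = h' G"
proof -
  have "sum h X = sum h' X"
    using arg_cong[OF eq, of snd] by (simp add: od_sum_def snd_sum)
  then have zero_iff: "(\<forall>G\<in>X. h G = 0) \<longleftrightarrow> (\<forall>G\<in>X. h' G = 0)"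
    using sum_nonneg_eq_0_iff[OF X] h(1) h'(1) by metis
  show ?thesis
  proof (cases rule: od_sum_cases[OF X h, of c])
    case 1
    then show ?thesis using zero_iff by simp
  next
    case (2 F)
    then obtain F' where F': "F' \<in> X" "0 < h' F'" "\<forall>G\<in>X. G \<noteq> F' \<longrightarrow> h' G = 0"
      "od_sum c h' X = (h' F' * real (c F'), h' F')"
      using od_sum_cases[OF X h', of c] zero_iff by force
    from eq have "(h F * real (c F), h F) = (h' F' * real (c F'), h' F')"
      unfolding 2(4) F'(4) .
    then have same: "h F = h' F'" "c F = c F'" using 2(2) by auto
    then have "F = F'" using c 2(1) F'(1) unfolding inj_on_def by blast
    then show ?thesis using 2 F' same(1) by metis
  qed
qed

lemma od_sum_in_m_od:
  assumes X: "finite X" and c: "c ` X \<subseteq> {..<m}" and m: "0 < m"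
    and h: "\<forall>G\<in>X. 0 \<le> h G \<and> h G \<le> 1" "at_most_one_positive h X"
  shows "od_sum c h X \<in> m_od m"
proof -
  have nonneg: "\<forall>G\<in>X. 0 \<le> h G" using h(1) by blast
  show ?thesis
  proof (cases rule: od_sum_cases[OF X nonneg h(2), of c])
    case 1
    then have "od_sum c h X = (0 *\<^sub>R real 0, 0)" by (simp add: zero_prod_def)
    then show ?thesis using m unfolding m_od_def cone_over_def by force
  next
    case (2 F)
    then have "od_sum c h X = (h F *\<^sub>R real (c F), h F)" "c F < m" using c by auto
    then show ?thesis using h(1) 2(1) unfolding m_od_def cone_over_def by force
  qed
qed


definition vertices :: "'a::euclidean_space set \<Rightarrow> 'a set" where
  "vertices S = {v. v extreme_point_of S}"

lemma vertices_convex_hull: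
  "\<not> affine_dependent C \<Longrightarrow> vertices (convex hull C) = C"
  unfolding vertices_def using extreme_point_of_convex_hull_affine_independent by auto

lemma simplex_vertices:
  assumes "k simplex S"
  shows "finite (vertices S)" "\<not> affine_dependent (vertices S)"
    "convex hull (vertices S) = S" "int (card (vertices S)) = k + 1"
proof -
  obtain C where C: "\<not> affine_dependent C" "int (card C) = k + 1" "S = convex hull C"
    using assms unfolding simplex_def by blast
  then have "vertices S = C" using vertices_convex_hull by blast
  then show "finite (vertices S)" "\<not> affine_dependent (vertices S)"
    "convex hull (vertices S) = S" "int (card (vertices S)) = k + 1"
    using C aff_independent_finite by auto
qed

lemma face_of_simplex_vertices:
  assumes C: "\<not> affine_dependent C" and F: "F face_of convex hull C"
  shows "vertices F \<subseteq> C" "convex hull (vertices F) = F"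
proof -
  obtain D where D: "D \<subseteq> C" "F = convex hull D"
    using F face_of_convex_hull_affine_independent[OF C] by blast
  then have "vertices F = D"
    using vertices_convex_hull affine_independent_subset[OF C] by blast
  then show "vertices F \<subseteq> C" "convex hull (vertices F) = F" using D by auto
qed

lemma barycentric_unique:
  fixes C :: "'a::real_vector set"
  assumes "finite C" "\<not> affine_dependent C" "sum a C = 1" "sum b C = 1"
    "(\<Sum>v\<in>C. a v *\<^sub>R v) = (\<Sum>v\<in>C. b v *\<^sub>R v)" "v \<in> C"
  shows "a v = b v"
proof -
  have "sum (\<lambda>v. a v - b v) C = 0" "(\<Sum>v\<in>C. (a v - b v) *\<^sub>R v) = 0"
    using assms by (simp_all add: sum_subtractf scaleR_diff_left)
  then show ?thesis
    using assms(2,6) affine_dependent_explicit_finite[OF assms(1)] by force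
qed


locale triangulation =
  fixes K :: "'a::euclidean_space set set" and n :: nat
  assumes simplicial: "simplicial_complex K"
    and dim_le: "\<forall>S\<in>K. \<forall>k. k simplex S \<longrightarrow> k \<le> int n"
begin

definition Vert :: "'a set" where "Vert = (\<Union>S\<in>K. vertices S)"

definition bary :: "'a set \<Rightarrow> ('a \<Rightarrow> real) set" where
  "bary S = {u. (\<forall>v. 0 \<le> u v) \<and> (\<forall>v. v \<notin> vertices S \<longrightarrow> u v = 0) \<and> sum u (vertices S) = 1}"

definition bary_point :: "('a \<Rightarrow> real) \<Rightarrow> 'a" where
  "bary_point u = (\<Sum>v\<in>Vert. u v *\<^sub>R v)"

lemma simplex_in_K:
  assumes "S \<in> K"
  shows "finite (vertices S)" "\<not> affine_dependent (vertices S)"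
    "convex hull (vertices S) = S" "card (vertices S) \<le> Suc n"
proof -
  obtain k where k: "k simplex S" using simplicial assms unfolding simplicial_complex_def by blast
  show "finite (vertices S)" "\<not> affine_dependent (vertices S)" "convex hull (vertices S) = S"
    using simplex_vertices[OF k] by auto
  have "k \<le> int n" using dim_le assms k by blast
  then show "card (vertices S) \<le> Suc n" using simplex_vertices(4)[OF k] by simp
qed

lemma finite_K: "finite K"
  using simplicial unfolding simplicial_complex_def by simp

lemma finite_Vert: "finite Vert"
  unfolding Vert_def using finite_K simplex_in_K(1) by auto

lemma bary_sum_Vert:
  assumes S: "S \<in> K" and u: "u \<in> bary S"
  shows "sum u Vert = 1" "bary_point u = (\<Sum>v\<in>vertices S. u v *\<^sub>R v)"
proof -
  have sub: "vertices S \<subseteq> Vert" using S unfolding Vert_def by auto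
  have zero: "\<forall>v\<in>Vert - vertices S. u v = 0" using u unfolding bary_def by auto
  show "sum u Vert = 1"
    using u zero sum.mono_neutral_left[OF finite_Vert sub, of u] unfolding bary_def by simp
  show "bary_point u = (\<Sum>v\<in>vertices S. u v *\<^sub>R v)"
    using zero sum.mono_neutral_left[OF finite_Vert sub, of "\<lambda>v. u v *\<^sub>R v"]
    unfolding bary_point_def by simp
qed

lemma bary_nonneg: "u \<in> bary S \<Longrightarrow> 0 \<le> u v"
  and bary_zero: "u \<in> bary S \<Longrightarrow> v \<notin> vertices S \<Longrightarrow> u v = 0"
  unfolding bary_def by auto

lemma bary_le_1:
  assumes S: "S \<in> K" and u: "u \<in> bary S"
  shows "u v \<le> 1"
proof (cases "v \<in> vertices S")
  case True
  then have "u v \<le> sum u (vertices S)"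
    using simplex_in_K(1)[OF S] bary_nonneg[OF u] by (intro member_le_sum) auto
  then show ?thesis using u unfolding bary_def by simp
qed (use bary_zero[OF u] in simp)

lemma compact_bary:
  assumes S: "S \<in> K"
  shows "compact (bary S)"
proof -
  have "closed (bary S)"
  proof -
    have "bary S = (\<Inter>v. {u. 0 \<le> u v}) \<inter> (\<Inter>v\<in>- vertices S. {u. u v = 0})
        \<inter> {u. sum u (vertices S) = 1}"
      unfolding bary_def by auto
    then show ?thesis
      by (simp only:) (intro closed_Int closed_INT ballI closed_Collect_le closed_Collect_eq
          continuous_intros continuous_on_coordinate)
  qed
  moreover have "bary S = {u. \<forall>v. u v \<in> {0..1}} \<inter> bary S"
    using bary_nonneg bary_le_1[OF S] by auto
  ultimately show ?thesis using compact_Int_closed[OF compact_unit_cube] by metis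
qed

lemma bary_point_image:
  assumes S: "S \<in> K"
  shows "bary_point ` bary S = S"
proof -
  have fin: "finite (vertices S)" using simplex_in_K(1)[OF S] .
  have mem: "y \<in> S \<longleftrightarrow> (\<exists>w. (\<forall>v\<in>vertices S. 0 \<le> w v) \<and> sum w (vertices S) = 1
      \<and> (\<Sum>v\<in>vertices S. w v *\<^sub>R v) = y)" for y
  proof -
    have "y \<in> convex hull (vertices S) \<longleftrightarrow> (\<exists>w. (\<forall>v\<in>vertices S. 0 \<le> w v)
        \<and> sum w (vertices S) = 1 \<and> (\<Sum>v\<in>vertices S. w v *\<^sub>R v) = y)"
      unfolding convex_hull_finite[OF fin] by simp
    then show ?thesis unfolding simplex_in_K(3)[OF S] .
  qed
  show ?thesis
  proof
    show "bary_point ` bary S \<subseteq> S"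
    proof
      fix y assume "y \<in> bary_point ` bary S"
      then obtain u where u: "u \<in> bary S" and y: "y = bary_point u" by blast
      have "(\<forall>v\<in>vertices S. 0 \<le> u v) \<and> sum u (vertices S) = 1
          \<and> (\<Sum>v\<in>vertices S. u v *\<^sub>R v) = y"
        using u bary_sum_Vert(2)[OF S u] y unfolding bary_def by simp
      then show "y \<in> S" using mem by blast
    qed
    show "S \<subseteq> bary_point ` bary S"
    proof
      fix y assume "y \<in> S"
      then obtain w where w: "\<forall>v\<in>vertices S. 0 \<le> w v" "sum w (vertices S) = 1"
        "(\<Sum>v\<in>vertices S. w v *\<^sub>R v) = y" using mem by blast
      define u where "u = (\<lambda>v. if v \<in> vertices S then w v else 0)"
      have sum_u: "sum u (vertices S) = sum w (vertices S)"
        unfolding u_def by (rule sum.cong) simp_all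
      have point_u: "(\<Sum>v\<in>vertices S. u v *\<^sub>R v) = (\<Sum>v\<in>vertices S. w v *\<^sub>R v)"
        unfolding u_def by (rule sum.cong) simp_all
      have "\<forall>v. 0 \<le> u v" "\<forall>v. v \<notin> vertices S \<longrightarrow> u v = 0"
        using w(1) unfolding u_def by simp_all
      then have u: "u \<in> bary S" unfolding bary_def using sum_u w(2) by simp
      then have "bary_point u = y" using bary_sum_Vert(2)[OF S u] point_u w(3) by simp
      then show "y \<in> bary_point ` bary S" using u by blast
    qed
  qed
qed

lemma bary_of_face:
  assumes S: "S \<in> K" and u: "u \<in> bary S" and D: "D \<subseteq> vertices S"
    and w: "sum w D = 1" "(\<Sum>v\<in>D. w v *\<^sub>R v) = bary_point u"
  shows "u = (\<lambda>v. if v \<in> D then w v else 0)"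
proof
  fix v
  define w' where "w' = (\<lambda>v. if v \<in> D then w v else 0)"
  have fin: "finite (vertices S)" using simplex_in_K(1)[OF S] .
  have "sum w' (vertices S) = sum w D"
    using sum.inter_restrict[OF fin, of w D] D unfolding w'_def by (simp add: Int_absorb1)
  moreover have "(\<Sum>v\<in>vertices S. w' v *\<^sub>R v) = (\<Sum>v\<in>vertices S. if v \<in> D then w v *\<^sub>R v else 0)"
    unfolding w'_def by (rule sum.cong) auto
  then have "(\<Sum>v\<in>vertices S. w' v *\<^sub>R v) = (\<Sum>v\<in>D. w v *\<^sub>R v)"
    using sum.inter_restrict[OF fin, of "\<lambda>v. w v *\<^sub>R v" D] D by (simp add: Int_absorb1)
  ultimately have w': "sum w' (vertices S) = 1" "(\<Sum>v\<in>vertices S. w' v *\<^sub>R v) = bary_point u"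
    using w by simp_all
  have u1: "sum u (vertices S) = 1" using u unfolding bary_def by simp
  have "u v = w' v" if "v \<in> vertices S"
    using barycentric_unique[OF fin simplex_in_K(2)[OF S] u1 w'(1) _ that]
      bary_sum_Vert(2)[OF S u] w'(2) by simp
  moreover have "u v = w' v" if "v \<notin> vertices S"
    using that D bary_zero[OF u] unfolding w'_def by auto
  ultimately show "u v = (if v \<in> D then w v else 0)" unfolding w'_def by metis
qed

text \<open>Barycentric coordinates are unique across the whole complex, since two simplices
  meet in a common face.\<close>
lemma bary_point_inj:
  assumes S: "S \<in> K" and T: "T \<in> K" and u: "u \<in> bary S" and u': "u' \<in> bary T"
    and eq: "bary_point u = bary_point u'"
  shows "u = u'"
proof -
  define D where "D = vertices (S \<inter> T)"
  have "(S \<inter> T) face_of S" "(T \<inter> S) face_of T"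
    using simplicial S T unfolding simplicial_complex_def by blast+
  then have "(S \<inter> T) face_of convex hull (vertices S)" "(S \<inter> T) face_of convex hull (vertices T)"
    using simplex_in_K(3)[OF S] simplex_in_K(3)[OF T] by (simp_all add: Int_commute)
  then have D: "D \<subseteq> vertices S" "D \<subseteq> vertices T" "convex hull D = S \<inter> T"
    using face_of_simplex_vertices simplex_in_K(2)[OF S] simplex_in_K(2)[OF T]
    unfolding D_def by blast+
  have fin: "finite D" using D(1) simplex_in_K(1)[OF S] finite_subset by blast
  have "bary_point u \<in> convex hull D"
    using bary_point_image[OF S] bary_point_image[OF T] u u' eq D(3) by blast
  then obtain w where w: "sum w D = 1" "(\<Sum>v\<in>D. w v *\<^sub>R v) = bary_point u"
    unfolding convex_hull_finite[OF fin] by blast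
  show ?thesis
    using bary_of_face[OF S u D(1) w] bary_of_face[OF T u' D(2) w(1) w(2)[unfolded eq]] by simp
qed


definition params :: "(('a \<Rightarrow> real) \<times> real) set" where
  "params = (\<Union>S\<in>K. bary S) \<times> {0..1}"

definition cone_map :: "('a \<Rightarrow> real) \<times> real \<Rightarrow> 'a \<times> real" where
  "cone_map z = (snd z *\<^sub>R bary_point (fst z), snd z)"

definition layers_of_card :: "nat \<Rightarrow> 'a set set" where
  "layers_of_card j = {F. F \<subseteq> Vert \<and> card F = Suc j}"

definition od_map :: "('a set \<Rightarrow> nat) \<Rightarrow> ('a \<Rightarrow> real) \<times> real \<Rightarrow> nat \<Rightarrow> real \<times> real" where
  "od_map c z = (\<lambda>j. if j \<le> n
      then od_sum c (\<lambda>F. snd z * layer Vert (fst z) 0 F) (layers_of_card j) else 0)"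

lemma compact_params: "compact params"
  unfolding params_def using finite_K compact_bary by (intro compact_Times compact_UN) auto

lemma continuous_cone_map: "continuous_on params cone_map"
proof -
  have "continuous_on params (\<lambda>z. fst z v)" for v
    using continuous_on_compose[OF continuous_on_fst[OF continuous_on_id] continuous_on_coordinate]
    by (simp add: o_def)
  then show ?thesis unfolding cone_map_def bary_point_def by (intro continuous_intros)
qed

lemma layers_of_card_props:
  assumes "F \<in> layers_of_card j"
  shows "F \<subseteq> Vert" "finite F" "F \<noteq> {}" "card F = Suc j"
  using assms finite_Vert finite_subset unfolding layers_of_card_def by auto

lemma finite_layers_of_card: "finite (layers_of_card j)"
  unfolding layers_of_card_def using finite_Vert by (auto intro: finite_subset[of _ "Pow Vert"])

lemma continuous_od_map: "continuous_on params (od_map c)"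
proof (rule continuous_on_coordinatewise_then_product)
  fix j
  have "continuous_on params (\<lambda>z. layer Vert (fst z) 0 F)" if "F \<in> layers_of_card j" for F
    using continuous_on_compose[OF continuous_on_fst[OF continuous_on_id]
        continuous_on_layer[OF finite_Vert layers_of_card_props(2,3)[OF that]]]
    by (simp add: o_def)
  then have "continuous_on params (\<lambda>z. od_sum c (\<lambda>F. snd z * layer Vert (fst z) 0 F) (layers_of_card j))"
    unfolding od_sum_def by (intro continuous_intros) auto
  then show "continuous_on params (\<lambda>z. od_map c z j)"
    unfolding od_map_def by (cases "j \<le> n") auto
qed

lemma cone_map_image: "cone_map ` params = cone_over (\<Union>K)"
proof -
  have image: "bary_point ` (\<Union>S\<in>K. bary S) = \<Union>K" using bary_point_image by (auto simp: image_UN)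
  show ?thesis
    unfolding cone_map_def params_def cone_over_def image[symmetric] by force
qed

lemma scaled_layers_one_positive:
  assumes "0 \<le> t"
  shows "at_most_one_positive (\<lambda>F. t * layer Vert u 0 F) (layers_of_card j)"
  unfolding at_most_one_positive_def
proof (intro ballI impI)
  fix F G assume F: "F \<in> layers_of_card j" and G: "G \<in> layers_of_card j"
    and pos: "0 < t * layer Vert u 0 F" "0 < t * layer Vert u 0 G"
  then have "0 < layer Vert u 0 F" "0 < layer Vert u 0 G"
    using assms by (auto simp: zero_less_mult_iff)
  then show "F = G"
    using layer_unique[OF finite_Vert] layers_of_card_props(1,4)[OF F] layers_of_card_props(1,4)[OF G]
    by metis
qed

text \<open>Only layers with at most n + 1 elements carry weight: a layer of positive weight
  consists of vertices of the simplex carrying u.\<close>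
lemma layer_large_zero:
  assumes S: "S \<in> K" and u: "u \<in> bary S" and F: "F \<subseteq> Vert" and large: "Suc n < card F"
  shows "layer Vert u 0 F = 0"
proof (rule ccontr)
  assume "layer Vert u 0 F \<noteq> 0"
  then have pos: "layer Vert u 0 F > 0" using layer_nonneg[of Vert u 0 F] by simp
  have "F \<subseteq> vertices S"
    using layer_pos_imp_pos[OF finite_Vert finite_subset[OF F finite_Vert] _ pos] bary_zero[OF u]
    by force
  then have "card F \<le> card (vertices S)" using card_mono simplex_in_K(1)[OF S] by blast
  then show False using simplex_in_K(4)[OF S] large by simp
qed

lemma od_map_eq_layers:
  assumes S: "S \<in> K" and T: "T \<in> K" and u: "u \<in> bary S" and u': "u' \<in> bary T"
    and t: "0 \<le> t" "0 \<le> t'" and c: "inj_on c (Pow Vert)"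
    and eq: "od_map c (u, t) = od_map c (u', t')"
    and F: "F \<subseteq> Vert" "F \<noteq> {}"
  shows "t * layer Vert u 0 F = t' * layer Vert u' 0 F"
proof (cases "card F \<le> Suc n")
  case True
  define j where "j = card F - 1"
  have "card F = Suc j" using F finite_subset[OF _ finite_Vert] unfolding j_def
    by (simp add: card_gt_0_iff)
  then have j: "j \<le> n" "F \<in> layers_of_card j" using True F unfolding layers_of_card_def by auto
  have inj: "inj_on c (layers_of_card j)"
    using c by (rule inj_on_subset) (auto simp: layers_of_card_def)
  have "od_map c (u, t) j = od_map c (u', t') j" using eq by simp
  then have "od_sum c (\<lambda>F. t * layer Vert u 0 F) (layers_of_card j)
      = od_sum c (\<lambda>F. t' * layer Vert u' 0 F) (layers_of_card j)"
    using j(1) unfolding od_map_def by simp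
  then have "\<forall>G\<in>layers_of_card j. t * layer Vert u 0 G = t' * layer Vert u' 0 G"
    by (intro od_sum_inj[OF finite_layers_of_card inj _ scaled_layers_one_positive[OF t(1)]
          _ scaled_layers_one_positive[OF t(2)]]) (auto intro!: mult_nonneg_nonneg simp: t layer_nonneg)
  then show ?thesis using j(2) by blast
next
  case False
  then show ?thesis using layer_large_zero[OF S u F(1)] layer_large_zero[OF T u' F(1)] by simp
qed

lemma cone_map_eq_iff:
  assumes "(u, t) \<in> params" "(u', t') \<in> params"
  shows "cone_map (u, t) = cone_map (u', t') \<longleftrightarrow> t = t' \<and> (t = 0 \<or> u = u')"
  using assms bary_point_inj unfolding params_def cone_map_def by auto

lemma od_map_eq_iff:
  assumes z: "(u, t) \<in> params" "(u', t') \<in> params" and c: "inj_on c (Pow Vert)"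
  shows "od_map c (u, t) = od_map c (u', t') \<longleftrightarrow> t = t' \<and> (t = 0 \<or> u = u')"
proof
  assume eq: "od_map c (u, t) = od_map c (u', t')"
  obtain S T where S: "S \<in> K" "u \<in> bary S" "0 \<le> t" and T: "T \<in> K" "u' \<in> bary T" "0 \<le> t'"
    using z unfolding params_def by auto
  have coord: "t * u v = t' * u' v" if v: "v \<in> Vert" for v
  proof -
    let ?L = "{F. F \<subseteq> Vert \<and> F \<noteq> {} \<and> v \<in> F}"
    have "t * u v = (\<Sum>F\<in>?L. t * layer Vert u 0 F)"
      using layer_cake[OF finite_Vert _ v, of 0 u] bary_nonneg[OF S(2)]
      by (simp add: sum_distrib_left[symmetric])
    also have "\<dots> = (\<Sum>F\<in>?L. t' * layer Vert u' 0 F)"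
      using od_map_eq_layers[OF S(1) T(1) S(2) T(2) S(3) T(3) c eq] by (intro sum.cong) auto
    also have "\<dots> = t' * u' v"
      using layer_cake[OF finite_Vert _ v, of 0 u'] bary_nonneg[OF T(2)]
      by (simp add: sum_distrib_left[symmetric])
    finally show ?thesis .
  qed
  have "t = t * sum u Vert" using bary_sum_Vert(1)[OF S(1,2)] by simp
  also have "\<dots> = t' * sum u' Vert" using coord by (simp add: sum_distrib_left)
  finally have tt: "t = t'" using bary_sum_Vert(1)[OF T(1,2)] by simp
  have "u v = u' v" if "t \<noteq> 0" for v
  proof (cases "v \<in> Vert")
    case False
    then have "v \<notin> vertices S" "v \<notin> vertices T" using S T unfolding Vert_def by auto
    then show ?thesis using bary_zero S T by metis
  qed (use coord tt that in simp)
  then show "t = t' \<and> (t = 0 \<or> u = u')" using tt by auto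
next
  show "t = t' \<and> (t = 0 \<or> u = u') \<Longrightarrow> od_map c (u, t) = od_map c (u', t')"
    unfolding od_map_def by auto
qed

lemma od_map_image:
  assumes c: "bij_betw c (Pow Vert) {..<m}"
  shows "od_map c ` params \<subseteq> power_space n (m_od m)"
proof
  fix p assume "p \<in> od_map c ` params"
  then obtain S u t where S: "S \<in> K" "u \<in> bary S" and t: "0 \<le> t" "t \<le> 1"
    and p: "p = od_map c (u, t)" unfolding params_def by auto
  have "c {} < m" using c unfolding bij_betw_def by auto
  then have m: "0 < m" by simp
  have weights: "\<forall>F\<in>layers_of_card j. 0 \<le> t * layer Vert u 0 F \<and> t * layer Vert u 0 F \<le> 1" for j
  proof
    fix F assume F: "F \<in> layers_of_card j"
    obtain v where v: "v \<in> F" using layers_of_card_props(3)[OF F] by auto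
    have "layer Vert u 0 F \<le> u v"
      using layer_le[OF finite_Vert layers_of_card_props(2)[OF F] v bary_nonneg[OF S(2)]] .
    also have "u v \<le> 1" using bary_le_1[OF S] .
    finally have "layer Vert u 0 F \<le> 1" .
    then show "0 \<le> t * layer Vert u 0 F \<and> t * layer Vert u 0 F \<le> 1"
      using t layer_nonneg[of Vert u 0 F] by (auto intro: mult_le_one)
  qed
  have "p j \<in> m_od m" if "j \<le> n" for j
  proof -
    have "c ` layers_of_card j \<subseteq> {..<m}"
      using c unfolding bij_betw_def layers_of_card_def by auto
    then have "od_sum c (\<lambda>F. t * layer Vert u 0 F) (layers_of_card j) \<in> m_od m"
      using od_sum_in_m_od[OF finite_layers_of_card _ m weights scaled_layers_one_positive[OF t(1)]]
      by blast
    then show ?thesis using that unfolding p od_map_def by simp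
  qed
  moreover have "p j = 0" if "n < j" for j using that unfolding p od_map_def by simp
  ultimately show "p \<in> power_space n (m_od m)" unfolding power_space_def by blast
qed
end


theorem mainTheorem15:
  fixes P :: "'a::euclidean_space set" and n :: nat
  assumes "polyhedron_of_dim n P"
  shows "\<exists>m::nat. \<exists>Y. Y \<subseteq> power_space n (m_od m) \<and> cone_over P homeomorphic Y"
proof -
  obtain K where K: "simplicial_complex K" "\<Union>K = P" "\<forall>S\<in>K. \<forall>k. k simplex S \<longrightarrow> k \<le> int n"
    using assms unfolding polyhedron_of_dim_def by blast
  interpret triangulation K n using K by unfold_locales auto
  obtain c where c: "bij_betw c (Pow Vert) {..<card (Pow Vert)}"
    using ex_bij_betw_finite_nat[of "Pow Vert"] finite_Vert by (auto simp: atLeast0LessThan)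
  have same_fibres: "cone_map z = cone_map z' \<longleftrightarrow> od_map c z = od_map c z'"
    if "z \<in> params" "z' \<in> params" for z z'
  proof -
    obtain u t u' t' where "z = (u, t)" "z' = (u', t')" by fastforce
    then show ?thesis
      using that cone_map_eq_iff od_map_eq_iff[OF _ _ bij_betw_imp_inj_on[OF c]] by simp
  qed
  have "cone_map ` params homeomorphic od_map c ` params"
    by (rule homeomorphic_images_same_fibres[OF compact_params continuous_cone_map
          continuous_od_map same_fibres])
  then have "cone_over P homeomorphic od_map c ` params"
    using cone_map_image K(2) by simp
  then show ?thesis using od_map_image[OF c] by blast
qed

end
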